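(* Let $X$ and $\Theta$ be compact metric spaces, $\tau:\Theta\times X\to X$, $(\theta,x)\mapsto\tau_\theta(x)$, continuous, $\Omega=X\times\Theta$, and $\mathcal{H}$ the set of holonomic Borel probability measures on $\Omega$, i.e. those $\hat\nu$ with $\int_\Omega [f(\tau_\theta(x))-f(x)]\,d\hat\nu(x,\theta)=0$ for all $f\in C(X,\mathbb{R})$; for $\hat\nu\in\mathcal{H}$ write $\nu$ for its marginal on $X$. Let $\mu$ be a Borel probability on $\Theta$ and $\psi:X\to\mathbb{R}$ a positive continuous function. With $B_\mu(g)(x)=\int_\Theta g(\tau_\theta(x))\,d\mu(\theta)$, $h_v(\hat\nu)=\inf_{g\in C(X,\mathbb{R}),\,g>0}\int_X\ln\frac{B_\mu(g)}{g}\,d\nu$, $dq_x(\theta)=\psi(\tau_\theta(x))\,d\mu(\theta)$, $B_q(g)(x)=\int_\Theta g(\tau_\theta(x))\,dq_x(\theta)$, and $P(\psi)=\sup_{\hat\nu\in\mathcal{H}}\inf_{g>0}\int_X\ln\frac{B_q(g)}{g}\,d\nu$, call $\hat\nu\in\mathcal{H}$ an equilibrium state for $(\psi,\mu)$ if $h_v(\hat\nu)+\int_X\log\psi\,d\nu=P(\psi)$. Then the set of equilibrium states for $(\psi,\mu)$ is nonempty. *)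

theory Defs
  imports "HOL-Probability.Probability"
begin

definition holonomic :: "('b::metric_space \<Rightarrow> 'a::metric_space \<Rightarrow> 'a) \<Rightarrow> ('a \<times> 'b) measure \<Rightarrow> bool" where
  "holonomic \<tau> \<nu> \<longleftrightarrow> prob_space \<nu> \<and> sets \<nu> = sets borel \<and>
     (\<forall>f :: 'a \<Rightarrow> real. continuous_on UNIV f \<longrightarrow>
        (\<integral>\<omega>. f (\<tau> (snd \<omega>) (fst \<omega>)) - f (fst \<omega>) \<partial>\<nu>) = 0)"

definition marg :: "('a::topological_space \<times> 'b::topological_space) measure \<Rightarrow> 'a measure" where
  "marg \<nu> = distr \<nu> borel fst"

definition B_mu :: "'b measure \<Rightarrow> ('b \<Rightarrow> 'a \<Rightarrow> 'a) \<Rightarrow> ('a \<Rightarrow> real) \<Rightarrow> 'a \<Rightarrow> real" where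
  "B_mu \<mu> \<tau> g x = (\<integral>\<theta>. g (\<tau> \<theta> x) \<partial>\<mu>)"

definition pos_cont_funs :: "('a::topological_space \<Rightarrow> real) set" where
  "pos_cont_funs = {g. continuous_on UNIV g \<and> (\<forall>x. g x > 0)}"

definition hol_entropy :: "('b::metric_space \<Rightarrow> 'a::metric_space \<Rightarrow> 'a) \<Rightarrow> 'b measure \<Rightarrow> ('a \<times> 'b) measure \<Rightarrow> ereal" where
  "hol_entropy \<tau> \<mu> \<nu> = (INF g\<in>pos_cont_funs. ereal (\<integral>x. ln (B_mu \<mu> \<tau> g x / g x) \<partial>marg \<nu>))"

definition q_meas :: "'b measure \<Rightarrow> ('b \<Rightarrow> 'a \<Rightarrow> 'a) \<Rightarrow> ('a \<Rightarrow> real) \<Rightarrow> 'a \<Rightarrow> 'b measure" where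
  "q_meas \<mu> \<tau> \<psi> x = density \<mu> (\<lambda>\<theta>. ennreal (\<psi> (\<tau> \<theta> x)))"

definition B_q :: "'b measure \<Rightarrow> ('b \<Rightarrow> 'a \<Rightarrow> 'a) \<Rightarrow> ('a \<Rightarrow> real) \<Rightarrow> ('a \<Rightarrow> real) \<Rightarrow> 'a \<Rightarrow> real" where
  "B_q \<mu> \<tau> \<psi> g x = (\<integral>\<theta>. g (\<tau> \<theta> x) \<partial>q_meas \<mu> \<tau> \<psi> x)"

definition hol_pressure :: "('b::metric_space \<Rightarrow> 'a::metric_space \<Rightarrow> 'a) \<Rightarrow> 'b measure \<Rightarrow> ('a \<Rightarrow> real) \<Rightarrow> ereal" where
  "hol_pressure \<tau> \<mu> \<psi> = (SUP \<nu>\<in>{\<nu>. holonomic \<tau> \<nu>}.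
      INF g\<in>pos_cont_funs. ereal (\<integral>x. ln (B_q \<mu> \<tau> \<psi> g x / g x) \<partial>marg \<nu>))"

definition equilibrium_state :: "('b::metric_space \<Rightarrow> 'a::metric_space \<Rightarrow> 'a) \<Rightarrow> 'b measure \<Rightarrow> ('a \<Rightarrow> real) \<Rightarrow> ('a \<times> 'b) measure \<Rightarrow> bool" where
  "equilibrium_state \<tau> \<mu> \<psi> \<nu> \<longleftrightarrow> holonomic \<tau> \<nu> \<and>
     hol_entropy \<tau> \<mu> \<nu> + ereal (\<integral>x. ln (\<psi> x) \<partial>marg \<nu>) = hol_pressure \<tau> \<mu> \<psi>"

end

(*
  Since B_q g = B_mu (g \<psi>) and g \<mapsto> g \<psi> permutes the positive continuous functions, the
  functional  \<nu> \<mapsto> inf_g \<integral> ln (B_q g / g) d\<nu>  equals  h_v(\<nu>) + \<integral> ln \<psi> d\<nu>.  So the equilibrium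
  states are exactly the holonomic measures at which this functional attains its supremum
  P(\<psi>). As an infimum of integrals of continuous functions, the functional is weakly upper
  semicontinuous. The holonomic measures form a nonempty (Krylov-Bogolyubov) weakly closed set
  of probability measures on the compact space X \<times> \<Theta>, and such measures are weakly
  sequentially compact; hence a weak limit point of a maximizing sequence is an equilibrium
  state.

  Weak sequential compactness is proved directly: fix nested finite Borel partitions of
  vanishing mesh, pass to a diagonal subsequence along which the mass of every cell converges,
  and realize the limit as the image of Lebesgue measure on [0,1) under a quantile map that
  follows, for a given t, the nested cells whose intervals contain t.
*)
theory Submission
  imports Defs "HOL-Library.Diagonal_Subsequence"
begin

definition converges_weakly :: "(nat \<Rightarrow> 'a::topological_space measure) \<Rightarrow> 'a measure \<Rightarrow> bool" where
  "converges_weakly N \<nu> \<longleftrightarrow>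
     (\<forall>f :: 'a \<Rightarrow> real. continuous_on UNIV f \<longrightarrow> (\<lambda>n. \<integral>x. f x \<partial>N n) \<longlonglongrightarrow> (\<integral>x. f x \<partial>\<nu>))"

lemma continuous_on_compact_UNIV_bounded:
  fixes h :: "'a::topological_space \<Rightarrow> real"
  assumes "compact (UNIV :: 'a set)" and "continuous_on UNIV h"
  shows "\<exists>B. \<forall>x. \<bar>h x\<bar> \<le> B"
  using compact_imp_bounded[OF compact_continuous_image[OF assms(2,1)]]
  unfolding bounded_iff by auto

lemma continuous_on_compact_UNIV_pos_bounded_below:
  fixes h :: "'a::topological_space \<Rightarrow> real"
  assumes "compact (UNIV :: 'a set)" and "continuous_on UNIV h" and "\<And>x. h x > 0"
  shows "\<exists>m>0. \<forall>x. m \<le> h x"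
proof -
  obtain x0 where "\<forall>y. h x0 \<le> h y"
    using continuous_attains_inf[OF assms(1) _ assms(2)] by auto
  then show ?thesis using assms(3)[of x0] by blast
qed

lemma integrable_continuous_on_compact_UNIV:
  fixes h :: "'a::topological_space \<Rightarrow> real"
  assumes "compact (UNIV :: 'a set)" and "continuous_on UNIV h"
    and "finite_measure M" and "sets M = sets borel"
  shows "integrable M h"
proof -
  interpret finite_measure M by fact
  obtain B where "\<And>x. \<bar>h x\<bar> \<le> B"
    using continuous_on_compact_UNIV_bounded[OF assms(1,2)] by blast
  moreover have "h \<in> borel_measurable M"
    using borel_measurable_continuous_onI[OF assms(2)] measurable_cong_sets[OF assms(4) refl] by blast
  ultimately show ?thesis by (intro integrable_const_bound[where B=B]) auto
qed

lemma prob_space_integral_diff_le: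
  fixes f g :: "'a \<Rightarrow> real"
  assumes "prob_space M" and "integrable M f" and "integrable M g"
    and "\<And>x. x \<in> space M \<Longrightarrow> \<bar>f x - g x\<bar> \<le> e"
  shows "\<bar>(\<integral>x. f x \<partial>M) - (\<integral>x. g x \<partial>M)\<bar> \<le> e"
proof -
  interpret prob_space M by fact
  have "\<bar>(\<integral>x. f x \<partial>M) - (\<integral>x. g x \<partial>M)\<bar> = \<bar>\<integral>x. f x - g x \<partial>M\<bar>"
    using assms by simp
  also have "\<dots> \<le> (\<integral>x. \<bar>f x - g x\<bar> \<partial>M)" by (rule integral_abs_bound)
  also have "\<dots> \<le> (\<integral>x. e \<partial>M)"
    using assms by (intro integral_mono) auto
  also have "\<dots> = e" by (simp add: prob_space)
  finally show ?thesis .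
qed

lemma integral_comp_finite_range:
  fixes g :: "'w \<Rightarrow> real"
  assumes "finite_measure M" and "finite W" and "\<And>x. x \<in> space M \<Longrightarrow> c x \<in> W"
    and "\<And>w. w \<in> W \<Longrightarrow> {x\<in>space M. c x = w} \<in> sets M"
  shows "integrable M (\<lambda>x. g (c x))"
    and "(\<integral>x. g (c x) \<partial>M) = (\<Sum>w\<in>W. g w * measure M {x\<in>space M. c x = w})"
proof -
  interpret finite_measure M by fact
  let ?A = "\<lambda>w. {x\<in>space M. c x = w}"
  have simple: "g (c x) = (\<Sum>w\<in>W. g w * indicator (?A w) x)" if "x \<in> space M" for x
  proof -
    have "(\<Sum>w\<in>W. g w * indicator (?A w) x) = (\<Sum>w\<in>W. if w = c x then g w else 0)"
      using that by (intro sum.cong) (auto simp: indicator_def)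
    also have "\<dots> = g (c x)" using assms(2,3) that by (simp add: sum.delta')
    finally show ?thesis by simp
  qed
  have int: "integrable M (\<lambda>x. g w * indicator (?A w) x)" if "w \<in> W" for w
    using assms(4)[OF that] by (simp add: less_top[symmetric])
  show "integrable M (\<lambda>x. g (c x))"
  proof (subst Bochner_Integration.integrable_cong[OF refl simple])
    show "integrable M (\<lambda>x. \<Sum>w\<in>W. g w * indicator (?A w) x)"
      by (intro Bochner_Integration.integrable_sum int)
  qed
  have "(\<integral>x. g (c x) \<partial>M) = (\<integral>x. (\<Sum>w\<in>W. g w * indicator (?A w) x) \<partial>M)"
    by (rule Bochner_Integration.integral_cong) (auto simp: simple)
  also have "\<dots> = (\<Sum>w\<in>W. g w * measure M (?A w))"
    using int by (simp add: Bochner_Integration.integral_sum Int_absorb2)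
  finally show "(\<integral>x. g (c x) \<partial>M) = (\<Sum>w\<in>W. g w * measure M (?A w))" .
qed

lemma integral_approx_finite_partition:
  fixes f :: "'a \<Rightarrow> real" and g :: "'w \<Rightarrow> real"
  assumes "prob_space M" and "integrable M f" and "finite W"
    and "\<And>x. x \<in> space M \<Longrightarrow> c x \<in> W"
    and "\<And>w. w \<in> W \<Longrightarrow> {x\<in>space M. c x = w} \<in> sets M"
    and "\<And>x. x \<in> space M \<Longrightarrow> \<bar>f x - g (c x)\<bar> \<le> e"
  shows "\<bar>(\<integral>x. f x \<partial>M) - (\<Sum>w\<in>W. g w * measure M {x\<in>space M. c x = w})\<bar> \<le> e"
proof -
  have "finite_measure M" using assms(1) by (simp add: prob_space_def)
  note comp = integral_comp_finite_range[OF this assms(3-5), of g]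
  show ?thesis
    using prob_space_integral_diff_le[OF assms(1,2) comp(1) assms(6)] by (simp add: comp(2))
qed

lemma bounded_double_seq_diagonal_convergent:
  fixes a :: "nat \<Rightarrow> nat \<Rightarrow> real"
  assumes bounded: "\<And>n i. \<bar>a n i\<bar> \<le> B"
  shows "\<exists>d. strict_mono d \<and> (\<forall>i. convergent (\<lambda>k. a (d k) i))"
proof -
  interpret subseqs "\<lambda>i s. convergent (\<lambda>k. a (s k) i)"
  proof unfold_locales
    fix i and s :: "nat \<Rightarrow> nat"
    have "\<forall>k. a (s k) i \<in> {-B..B}"
      using bounded by (simp add: abs_le_iff minus_le_iff)
    then obtain l r where "strict_mono r" "((\<lambda>k. a (s k) i) \<circ> r) \<longlonglongrightarrow> l"
      by (rule seq_compactE[OF compact_imp_seq_compact[OF compact_Icc]])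
    then show "\<exists>r. strict_mono r \<and> convergent (\<lambda>k. a ((s \<circ> r) k) i)"
      by (auto simp: convergent_def comp_def)
  qed
  have "convergent (\<lambda>k. a (diagseq k) i)" for i
  proof -
    have "convergent ((\<lambda>k. a (seqseq (Suc i) k) i) \<circ> (\<lambda>k. fold_reduce (Suc i) k (Suc i + k)))"
      by (intro convergent_subseq_convergent seqseq_holds subseq_diagonal_rest)
    then have "convergent (\<lambda>k. a ((diagseq \<circ> (+) (Suc i)) k) i)"
      unfolding diagseq_seqseq by (simp add: comp_def)
    then obtain l where "(\<lambda>k. a (diagseq (k + Suc i)) i) \<longlonglongrightarrow> l"
      by (auto simp: convergent_def add.commute)
    then have "(\<lambda>k. a (diagseq k) i) \<longlonglongrightarrow> l"
      by (rule LIMSEQ_offset)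
    then show ?thesis
      unfolding convergent_def by blast
  qed
  then show ?thesis using subseq_diagseq by blast
qed

definition unit_interval :: "real measure" where
  "unit_interval = restrict_space lborel {0..<1}"

lemma space_unit_interval: "space unit_interval = {0..<1}"
  by (simp add: unit_interval_def)

lemma prob_space_unit_interval: "prob_space unit_interval"
  by (rule prob_spaceI) (simp add: unit_interval_def emeasure_restrict_space space_restrict_space)

lemma measurable_unit_interval: "f \<in> measurable borel M \<Longrightarrow> f \<in> measurable unit_interval M"
  unfolding unit_interval_def by (rule measurable_restrict_space1) simp

lemma measure_unit_interval_atLeastLessThan:
  "{a..<b} \<subseteq> {0..<1} \<Longrightarrow> a \<le> b \<Longrightarrow> measure unit_interval {a..<b} = b - a"
  unfolding unit_interval_def by (subst measure_restrict_space) auto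

lemma bounded_diff_div_Suc_tendsto_0:
  fixes a :: "nat \<Rightarrow> real"
  assumes "\<And>k. \<bar>a k\<bar> \<le> B"
  shows "(\<lambda>n. (a (Suc n) - a 0) / real (Suc n)) \<longlonglongrightarrow> 0"
proof (rule tendsto_0_le[OF LIMSEQ_inverse_real_of_nat, where K="2 * B"])
  have "\<bar>a (Suc n) - a 0\<bar> \<le> 2 * B" for n
    using assms[of "Suc n"] assms[of 0] by linarith
  then show "\<forall>\<^sub>F n in sequentially. norm ((a (Suc n) - a 0) / real (Suc n))
      \<le> norm (inverse (real (Suc n))) * (2 * B)"
    by (intro always_eventually allI) (simp add: divide_inverse abs_mult mult.commute mult_left_mono)
qed

lemma SUP_attained_if_sequentially_upper_compact:
  fixes F :: "'m \<Rightarrow> ereal"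
  assumes "S \<noteq> {}"
    and upper_compact: "\<And>N :: nat \<Rightarrow> 'm. (\<And>n. N n \<in> S) \<Longrightarrow>
      \<exists>d \<nu>. strict_mono d \<and> \<nu> \<in> S \<and> limsup (\<lambda>n. F (N (d n))) \<le> F \<nu>"
  shows "\<exists>\<nu>\<in>S. F \<nu> = (SUP \<nu>\<in>S. F \<nu>)"
proof -
  obtain f where "incseq f" and f: "range f \<subseteq> F ` S" and sup: "(SUP \<nu>\<in>S. F \<nu>) = (SUP n. f n)"
    using Sup_countable_SUP[of "F ` S"] assms(1) by auto
  have "\<forall>n. \<exists>\<nu>\<in>S. f n = F \<nu>" using f by blast
  then obtain N where N: "\<And>n. N n \<in> S" and FN: "\<And>n. F (N n) = f n" by metis
  obtain d \<nu> where d: "strict_mono d" and "\<nu> \<in> S" and le: "limsup (\<lambda>n. F (N (d n))) \<le> F \<nu>"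
    using upper_compact[of N, OF N] by blast
  have "(\<lambda>n. F (N (d n))) \<longlonglongrightarrow> (SUP \<nu>\<in>S. F \<nu>)"
    using LIMSEQ_subseq_LIMSEQ[OF LIMSEQ_SUP[OF \<open>incseq f\<close>] d] by (simp add: FN sup comp_def)
  then have "(SUP \<nu>\<in>S. F \<nu>) \<le> F \<nu>"
    using le lim_imp_Limsup[OF trivial_limit_sequentially] by metis
  moreover have "F \<nu> \<le> (SUP \<nu>\<in>S. F \<nu>)" using \<open>\<nu> \<in> S\<close> by (rule SUP_upper)
  ultimately show ?thesis using \<open>\<nu> \<in> S\<close> by (blast intro: antisym)
qed

lemma INF_add_ereal_const: "(INF i\<in>I. f i + ereal c) = (INF i\<in>I. f i) + ereal c"
proof (rule antisym)
  show "(INF i\<in>I. f i) + ereal c \<le> (INF i\<in>I. f i + ereal c)"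
    by (intro INF_greatest add_right_mono INF_lower)
  have "(INF i\<in>I. f i + ereal c) - ereal c \<le> f i" if "i \<in> I" for i
    using INF_lower[OF that, of "\<lambda>i. f i + ereal c"] by (simp add: ereal_minus_le_iff)
  then have "(INF i\<in>I. f i + ereal c) - ereal c \<le> (INF i\<in>I. f i)" by (rule INF_greatest)
  then show "(INF i\<in>I. f i + ereal c) \<le> (INF i\<in>I. f i) + ereal c" by (simp add: ereal_minus_le_iff)
qed

section \<open>Weak sequential compactness of probability measures\<close>

text \<open>The cells of depth \<open>K + 1\<close> form a finite Borel partition into sets of diameter
  below \<open>2 * mesh K\<close>: the address of a point records, at each scale \<open>k\<close>, the least index of
  a point of the finite \<open>mesh k\<close>-net within distance \<open>mesh k\<close>.\<close>

locale prob_seq_on_compact =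
  fixes N :: "nat \<Rightarrow> 'c::metric_space measure"
  assumes compact_UNIV: "compact (UNIV :: 'c set)"
    and prob_space_N: "\<And>n. prob_space (N n)"
    and sets_N: "\<And>n. sets (N n) = sets borel"
begin

definition mesh :: "nat \<Rightarrow> real" where
  "mesh k = 1 / real (Suc k)"

definition net :: "nat \<Rightarrow> 'c list" where
  "net k = (SOME xs. \<forall>x. \<exists>j<length xs. dist x (xs ! j) < mesh k)"

definition net_index :: "'c \<Rightarrow> nat \<Rightarrow> nat" where
  "net_index x k = (LEAST j. j < length (net k) \<and> dist x (net k ! j) < mesh k)"

definition address :: "nat \<Rightarrow> 'c \<Rightarrow> nat list" where
  "address K x = map (net_index x) [0..<K]"

definition cell :: "nat list \<Rightarrow> 'c set" where
  "cell w = {x. address (length w) x = w}"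

definition cell_point :: "nat list \<Rightarrow> 'c" where
  "cell_point w = (SOME x. x \<in> cell w)"

lemma mesh_pos: "mesh k > 0"
  by (simp add: mesh_def)

lemma mesh_small: "e > 0 \<Longrightarrow> \<exists>k. 2 * mesh k < e"
  using reals_Archimedean[of "e / 2"] by (auto simp: mesh_def inverse_eq_divide)

lemma net_covers: "\<exists>j<length (net k). dist x (net k ! j) < mesh k"
proof -
  have "\<exists>S :: 'c set. finite S \<and> S \<subseteq> UNIV \<and> UNIV \<subseteq> (\<Union>y\<in>S. ball y (mesh k))"
    using seq_compact_imp_totally_bounded[OF compact_imp_seq_compact[OF compact_UNIV]] mesh_pos
    by simp
  then obtain S :: "'c set" where "finite S" and S: "UNIV \<subseteq> (\<Union>y\<in>S. ball y (mesh k))"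
    by auto
  then obtain xs where "set xs = S" using finite_list by blast
  have cover: "\<exists>j<length xs. dist x (xs ! j) < mesh k" for x
  proof -
    have "x \<in> (\<Union>y\<in>S. ball y (mesh k))" using S by blast
    then obtain y where "y \<in> set xs" "dist x y < mesh k"
      using \<open>set xs = S\<close> by (auto simp: dist_commute)
    then show ?thesis by (auto simp: in_set_conv_nth)
  qed
  then have "\<exists>xs :: 'c list. \<forall>x. \<exists>j<length xs. dist x (xs ! j) < mesh k"
    by blast
  from someI_ex[OF this] show ?thesis unfolding net_def by blast
qed

lemma net_index: "net_index x k < length (net k)" "dist x (net k ! net_index x k) < mesh k"
  using LeastI_ex[OF net_covers[of k x]] unfolding net_index_def by auto

lemma net_nonempty: "length (net k) > 0"
  using net_index(1)[of undefined k] by linarith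

lemma net_index_measurable: "(\<lambda>x. net_index x k) \<in> measurable borel (count_space UNIV)"
  unfolding net_index_def
proof (rule measurable_Least)
  fix j
  have "{x. j < length (net k) \<and> dist x (net k ! j) < mesh k} =
      (if j < length (net k) then ball (net k ! j) (mesh k) else {})"
    by (auto simp: dist_commute)
  then have "{x\<in>space borel. j < length (net k) \<and> dist x (net k ! j) < mesh k} \<in> sets borel"
    by simp
  then show "(\<lambda>x. j < length (net k) \<and> dist x (net k ! j) < mesh k) \<in> measurable borel (count_space UNIV)"
    by (simp only: pred_def[symmetric])
qed

lemma length_address [simp]: "length (address K x) = K"
  by (simp add: address_def)

lemma cell_Nil: "cell [] = UNIV"
  by (simp add: cell_def address_def)

lemma cell_snoc: "x \<in> cell (w @ [j]) \<longleftrightarrow> x \<in> cell w \<and> net_index x (length w) = j"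
  by (simp add: cell_def address_def)

lemma cell_conv_nth: "cell w = {x. \<forall>i<length w. net_index x i = w ! i}"
  unfolding cell_def address_def list_eq_iff_nth_eq by simp

lemma mem_cell_address: "x \<in> cell (address K x)"
  by (simp add: cell_def address_def)

lemma cell_address_eq: "x \<in> cell w \<Longrightarrow> address (length w) x = w"
  by (simp add: cell_def)

lemma cell_sets: "cell w \<in> sets borel"
proof -
  have "{x. net_index x i = w ! i} \<in> sets borel" for i
    using measurable_sets[OF net_index_measurable, of "{w ! i}" i] by (simp add: vimage_def)
  then have "(\<Inter>i<length w. {x. net_index x i = w ! i}) \<in> sets borel"
    by (cases "w = []") (auto intro!: sets.finite_INT)
  moreover have "cell w = (\<Inter>i<length w. {x. net_index x i = w ! i})"
    unfolding cell_conv_nth by blast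
  ultimately show ?thesis by simp
qed

lemma dist_cell:
  assumes "x \<in> cell w" and "y \<in> cell w" and "length w = Suc k"
  shows "dist x y < 2 * mesh k"
proof -
  have "net_index y k = net_index x k" using assms by (auto simp: cell_conv_nth)
  then have "dist y (net k ! net_index x k) < mesh k" using net_index(2)[of y k] by simp
  then show ?thesis
    using net_index(2)[of x k] dist_triangle2[of x y "net k ! net_index x k"] by linarith
qed

lemma cell_point: "cell w \<noteq> {} \<Longrightarrow> cell_point w \<in> cell w"
  unfolding cell_point_def by (rule someI_ex) auto

lemma cell_snoc_empty:
  assumes "length (net (length w)) \<le> j"
  shows "cell (w @ [j]) = {}"
proof -
  have False if "x \<in> cell (w @ [j])" for x
    using that net_index(1)[of x "length w"] assms by (simp add: cell_snoc)
  then show ?thesis by blast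
qed

lemma cell_eq_UN_children: "cell w = (\<Union>j<length (net (length w)). cell (w @ [j]))"
  using net_index(1) by (auto simp: cell_snoc)

lemma finite_range_address: "finite (range (address K))"
proof (rule finite_subset)
  let ?M = "\<Sum>i<K. length (net i)"
  have "net_index x i < ?M" if "i < K" for x i
    using net_index(1)[of x i] member_le_sum[of i "{..<K}" "\<lambda>i. length (net i)"] that by simp
  then show "range (address K) \<subseteq> {w. set w \<subseteq> {..<?M} \<and> length w = K}"
    by (auto simp: address_def)
qed (intro finite_lists_length_eq finite_lessThan)

lemma measure_cell_eq_sum_children:
  "measure (N n) (cell w) = (\<Sum>j<length (net (length w)). measure (N n) (cell (w @ [j])))"
proof -
  interpret prob_space "N n" by (rule prob_space_N)
  have "disjoint_family_on (\<lambda>j. cell (w @ [j])) {..<length (net (length w))}"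
    by (auto simp: disjoint_family_on_def cell_snoc)
  then show ?thesis
    by (subst cell_eq_UN_children, intro finite_measure_finite_Union) (auto simp: sets_N cell_sets)
qed

end

text \<open>Along a sequence whose cell masses converge, cell \<open>w\<close> is assigned the interval
  \<open>cell_interval w\<close> of length \<open>cell_mass w\<close>; the intervals of the children of \<open>w\<close> tile that
  of \<open>w\<close> in the order of their last index, and \<open>digits t K\<close> is the depth-\<open>K\<close> cell whose
  interval contains \<open>t\<close>.\<close>

locale cell_convergent_prob_seq = prob_seq_on_compact N for N :: "nat \<Rightarrow> 'c::metric_space measure" +
  assumes cell_convergent: "\<And>w. convergent (\<lambda>n. measure (N n) (cell w))"
begin

definition cell_mass :: "nat list \<Rightarrow> real" where
  "cell_mass w = lim (\<lambda>n. measure (N n) (cell w))"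

definition mass_before :: "nat list \<Rightarrow> nat \<Rightarrow> real" where
  "mass_before w j = (\<Sum>i<j. cell_mass (w @ [i]))"

definition cell_start :: "nat list \<Rightarrow> real" where
  "cell_start w = (\<Sum>i<length w. mass_before (take i w) (w ! i))"

abbreviation cell_interval :: "nat list \<Rightarrow> real set" where
  "cell_interval w \<equiv> {cell_start w ..< cell_start w + cell_mass w}"

definition digit :: "real \<Rightarrow> nat list \<Rightarrow> nat" where
  "digit t w = (LEAST j. t < cell_start w + mass_before w (Suc j))"

primrec digits :: "real \<Rightarrow> nat \<Rightarrow> nat list" where
  "digits t 0 = []"
| "digits t (Suc K) = digits t K @ [digit t (digits t K)]"

lemma length_digits [simp]: "length (digits t K) = K"
  by (induction K) auto

lemma cell_mass_tendsto: "(\<lambda>n. measure (N n) (cell w)) \<longlonglongrightarrow> cell_mass w"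
  unfolding cell_mass_def using cell_convergent convergent_LIMSEQ_iff by blast

lemma cell_mass_nonneg: "0 \<le> cell_mass w"
  by (rule LIMSEQ_le_const[OF cell_mass_tendsto]) simp

lemma cell_mass_Nil: "cell_mass [] = 1"
proof -
  have "measure (N n) (cell []) = 1" for n
    using prob_space.prob_space[OF prob_space_N[of n]] sets_eq_imp_space_eq[OF sets_N[of n]]
    by (simp add: cell_Nil)
  then show ?thesis using cell_mass_tendsto[of "[]"] by (simp add: LIMSEQ_const_iff)
qed

lemma cell_mass_empty: "cell w = {} \<Longrightarrow> cell_mass w = 0"
  using cell_mass_tendsto[of w] by (simp add: LIMSEQ_const_iff)

lemma cell_mass_eq_sum_children:
  "cell_mass w = (\<Sum>j<length (net (length w)). cell_mass (w @ [j]))"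
proof -
  have "(\<lambda>n. \<Sum>j<length (net (length w)). measure (N n) (cell (w @ [j])))
      \<longlonglongrightarrow> (\<Sum>j<length (net (length w)). cell_mass (w @ [j]))"
    by (intro tendsto_sum cell_mass_tendsto)
  then show ?thesis
    using cell_mass_tendsto[of w] LIMSEQ_unique by (simp add: measure_cell_eq_sum_children[symmetric])
qed

lemma mass_before_Suc: "mass_before w (Suc j) = mass_before w j + cell_mass (w @ [j])"
  by (simp add: mass_before_def)

lemma mass_before_mono: "j \<le> j' \<Longrightarrow> mass_before w j \<le> mass_before w j'"
  unfolding mass_before_def by (rule sum_mono2) (auto simp: cell_mass_nonneg)

lemma mass_before_nonneg: "0 \<le> mass_before w j"
  using mass_before_mono[of 0 j w] by (simp add: mass_before_def)

lemma mass_before_le_cell_mass: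
  assumes "cell_mass (w @ [j]) > 0"
  shows "mass_before w (Suc j) \<le> cell_mass w"
proof -
  have "j < length (net (length w))"
    using cell_snoc_empty[of w j] cell_mass_empty assms by force
  then show ?thesis
    using mass_before_mono[of "Suc j" "length (net (length w))" w]
    by (simp add: mass_before_def cell_mass_eq_sum_children[of w])
qed

lemma cell_start_Nil: "cell_start [] = 0"
  by (simp add: cell_start_def)

lemma cell_start_snoc: "cell_start (w @ [j]) = cell_start w + mass_before w j"
  by (simp add: cell_start_def nth_append)

lemma cell_interval_snoc:
  "cell_interval (w @ [j]) = {cell_start w + mass_before w j ..< cell_start w + mass_before w (Suc j)}"
  by (simp add: cell_start_snoc mass_before_Suc add.assoc)

lemma digit_eq:
  assumes "t \<in> cell_interval (w @ [j])"
  shows "digit t w = j"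
  unfolding digit_def
proof (rule Least_equality)
  show "t < cell_start w + mass_before w (Suc j)"
    using assms by (simp add: cell_interval_snoc)
  fix i assume i: "t < cell_start w + mass_before w (Suc i)"
  show "j \<le> i"
  proof (rule ccontr)
    assume "\<not> j \<le> i"
    then have "mass_before w (Suc i) \<le> mass_before w j" by (intro mass_before_mono) simp
    with i assms show False by (simp add: cell_interval_snoc)
  qed
qed

lemma digit_in_cell_interval:
  assumes "t \<in> cell_interval w"
  shows "t \<in> cell_interval (w @ [digit t w])"
proof -
  let ?L = "length (net (length w))"
  have ex: "t < cell_start w + mass_before w (Suc (?L - 1))"
    using assms net_nonempty by (simp add: mass_before_def cell_mass_eq_sum_children[of w])
  have upper: "t < cell_start w + mass_before w (Suc (digit t w))"
    unfolding digit_def by (rule LeastI[of _ "?L - 1"]) (rule ex)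
  have lower: "cell_start w + mass_before w (digit t w) \<le> t"
  proof (cases "digit t w")
    case 0 then show ?thesis using assms by (simp add: mass_before_def)
  next
    case (Suc j)
    then have "j < (LEAST j. t < cell_start w + mass_before w (Suc j))" by (simp add: digit_def)
    then show ?thesis using Suc not_less_Least by fastforce
  qed
  show ?thesis using lower upper by (simp add: cell_interval_snoc)
qed

lemma digits_in_cell_interval: "t \<in> {0..<1} \<Longrightarrow> t \<in> cell_interval (digits t K)"
  by (induction K) (auto simp: cell_start_Nil cell_mass_Nil digit_in_cell_interval simp del: atLeastLessThan_iff)

lemma cell_interval_snoc_subset:
  "cell_interval (w @ [j]) \<subseteq> cell_interval w"
proof (cases "cell_mass (w @ [j]) > 0")
  case True
  then show ?thesis
    using mass_before_le_cell_mass[OF True] mass_before_nonneg[of w j]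
    by (auto simp: cell_interval_snoc)
next
  case False
  then show ?thesis using cell_mass_nonneg[of "w @ [j]"] by auto
qed

lemma digits_preimage:
  "length w = K \<Longrightarrow> {t \<in> {0..<1}. digits t K = w} = cell_interval w"
proof (induction K arbitrary: w)
  case 0
  then show ?case by (auto simp: cell_start_Nil cell_mass_Nil)
next
  case (Suc K)
  then obtain v j where w: "w = v @ [j]" and v: "length v = K"
    by (metis length_Suc_conv_rev)
  show ?case
  proof (intro set_eqI iffI)
    fix t assume "t \<in> {t \<in> {0..<1}. digits t (Suc K) = w}"
    then show "t \<in> cell_interval w"
      using digits_in_cell_interval[of t "Suc K"] by auto
  next
    fix t assume t: "t \<in> cell_interval w"
    then have "t \<in> {t \<in> {0..<1}. digits t K = v}"
      using cell_interval_snoc_subset Suc.IH[OF v] unfolding w by blast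
    with t show "t \<in> {t \<in> {0..<1}. digits t (Suc K) = w}"
      unfolding w by (auto simp: digit_eq)
  qed
qed

lemma digits_measurable: "(\<lambda>t. digits t K) \<in> measurable borel (count_space UNIV)"
proof (induction K)
  case 0
  then show ?case by simp
next
  case (Suc K)
  have digit: "(\<lambda>t. digit t w) \<in> measurable borel (count_space UNIV)" for w
    unfolding digit_def
  proof (rule measurable_Least)
    fix j
    have "{t\<in>space borel. t < cell_start w + mass_before w (Suc j)} \<in> sets borel"
      by simp
    then show "(\<lambda>t. t < cell_start w + mass_before w (Suc j)) \<in> measurable borel (count_space UNIV)"
      by (simp only: pred_def[symmetric])
  qed
  have "(\<lambda>t. (\<lambda>w t. w @ [digit t w]) (digits t K) t) \<in> measurable borel (count_space UNIV)"
  proof (rule measurable_compose_countable[OF _ Suc.IH])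
    fix w :: "nat list"
    show "(\<lambda>t. w @ [digit t w]) \<in> measurable borel (count_space UNIV)"
      by (rule measurable_compose[OF digit]) (simp add: measurable_count_space_eq1)
  qed
  then show ?case by simp
qed

lemma measure_digits_eq:
  assumes "length w = K"
  shows "measure unit_interval {t\<in>space unit_interval. digits t K = w} = cell_mass w"
proof -
  have "{t\<in>space unit_interval. digits t K = w} = cell_interval w"
    using digits_preimage[OF assms] by (simp add: space_unit_interval)
  moreover have "cell_interval w \<subseteq> {0..<1}"
    using digits_preimage[OF assms] by blast
  ultimately show ?thesis
    using cell_mass_nonneg[of w] by (simp add: measure_unit_interval_atLeastLessThan)
qed

definition approx_point :: "nat \<Rightarrow> real \<Rightarrow> 'c" where
  "approx_point K t = cell_point (digits t K)"

definition quantile :: "real \<Rightarrow> 'c" where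
  "quantile t = lim (\<lambda>K. approx_point K t)"

definition limit_measure :: "'c measure" where
  "limit_measure = distr unit_interval borel quantile"

lemma approx_point_in_cell:
  assumes "t \<in> {0..<1}"
  shows "approx_point K t \<in> cell (digits t K)"
proof -
  have "cell_mass (digits t K) \<noteq> 0"
    using digits_in_cell_interval[OF assms, of K] by auto
  then have "cell (digits t K) \<noteq> {}" using cell_mass_empty by blast
  then show ?thesis unfolding approx_point_def by (rule cell_point)
qed

lemma digits_in_range_address: "t \<in> {0..<1} \<Longrightarrow> digits t K \<in> range (address K)"
  using cell_address_eq[OF approx_point_in_cell] by (metis length_digits rangeI)

lemma cell_digits_antimono: "K \<le> K' \<Longrightarrow> cell (digits t K') \<subseteq> cell (digits t K)"
proof (induction K' rule: dec_induct)
  case (step K')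
  then show ?case by (auto simp: cell_snoc)
qed simp

lemma dist_approx_point:
  assumes "t \<in> {0..<1}" and "Suc K \<le> m" and "Suc K \<le> n"
  shows "dist (approx_point m t) (approx_point n t) < 2 * mesh K"
proof (rule dist_cell[where w="digits t (Suc K)"])
  show "approx_point m t \<in> cell (digits t (Suc K))"
    using approx_point_in_cell[OF assms(1)] cell_digits_antimono[OF assms(2)] by blast
  show "approx_point n t \<in> cell (digits t (Suc K))"
    using approx_point_in_cell[OF assms(1)] cell_digits_antimono[OF assms(3)] by blast
qed simp

lemma approx_point_tendsto:
  assumes "t \<in> {0..<1}"
  shows "(\<lambda>K. approx_point K t) \<longlonglongrightarrow> quantile t"
proof -
  have "Cauchy (\<lambda>K. approx_point K t)"
  proof (rule metric_CauchyI)
    fix e :: real assume "e > 0"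
    then obtain K where "2 * mesh K < e" using mesh_small by blast
    then show "\<exists>M. \<forall>m\<ge>M. \<forall>n\<ge>M. dist (approx_point m t) (approx_point n t) < e"
      using dist_approx_point[OF assms] by (meson order.strict_trans)
  qed
  then obtain l where "(\<lambda>K. approx_point K t) \<longlonglongrightarrow> l"
    using compact_imp_complete[OF compact_UNIV] unfolding complete_def by blast
  then show ?thesis unfolding quantile_def by (simp add: limI)
qed

lemma dist_quantile_approx_point:
  assumes "t \<in> {0..<1}"
  shows "dist (quantile t) (approx_point (Suc K) t) \<le> 2 * mesh K"
proof (rule LIMSEQ_le_const2)
  show "(\<lambda>m. dist (approx_point m t) (approx_point (Suc K) t)) \<longlonglongrightarrow> dist (quantile t) (approx_point (Suc K) t)"
    by (intro tendsto_intros approx_point_tendsto[OF assms])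
  show "\<exists>M. \<forall>m\<ge>M. dist (approx_point m t) (approx_point (Suc K) t) \<le> 2 * mesh K"
    using dist_approx_point[OF assms] by (auto intro!: less_imp_le)
qed

lemma quantile_measurable: "quantile \<in> measurable unit_interval borel"
proof (rule borel_measurable_LIMSEQ_metric)
  show "approx_point K \<in> measurable unit_interval borel" for K
    unfolding approx_point_def[abs_def]
    by (rule measurable_compose[OF measurable_unit_interval[OF digits_measurable]])
      (simp add: measurable_count_space_eq1)
  show "(\<lambda>K. approx_point K t) \<longlonglongrightarrow> quantile t" if "t \<in> space unit_interval" for t
    using approx_point_tendsto that by (simp add: space_unit_interval)
qed

lemma prob_space_limit_measure: "prob_space limit_measure"
  unfolding limit_measure_def
  by (intro prob_space.prob_space_distr prob_space_unit_interval quantile_measurable)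

lemma sets_limit_measure: "sets limit_measure = sets borel"
  by (simp add: limit_measure_def)

lemma integral_N_near_cell_sum:
  fixes f :: "'c \<Rightarrow> real"
  assumes "continuous_on UNIV f" and osc: "\<And>x y. dist x y \<le> 2 * mesh K \<Longrightarrow> \<bar>f x - f y\<bar> \<le> e"
  shows "\<bar>(\<integral>x. f x \<partial>N n) - (\<Sum>w\<in>range (address (Suc K)). f (cell_point w) * measure (N n) (cell w))\<bar> \<le> e"
proof -
  have space: "space (N n) = UNIV" using sets_eq_imp_space_eq[OF sets_N] by simp
  have cell: "{x\<in>space (N n). address (Suc K) x = w} = cell w" if "w \<in> range (address (Suc K))" for w
    using that by (auto simp: space cell_def)
  have "\<bar>f x - f (cell_point (address (Suc K) x))\<bar> \<le> e" for x
    using mem_cell_address[of x "Suc K"] cell_point[of "address (Suc K) x"]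
    by (intro osc less_imp_le dist_cell[where w="address (Suc K) x"]) auto
  then have "\<bar>(\<integral>x. f x \<partial>N n) - (\<Sum>w\<in>range (address (Suc K)). f (cell_point w) *
      measure (N n) {x\<in>space (N n). address (Suc K) x = w})\<bar> \<le> e"
    using prob_space_N[of n] sets_N[of n]
    by (intro integral_approx_finite_partition integrable_continuous_on_compact_UNIV compact_UNIV assms(1)
        finite_range_address) (auto simp: cell cell_sets prob_space_def)
  then show ?thesis by (simp add: cell)
qed

lemma integral_limit_measure_near_cell_sum:
  fixes f :: "'c \<Rightarrow> real"
  assumes "continuous_on UNIV f" and osc: "\<And>x y. dist x y \<le> 2 * mesh K \<Longrightarrow> \<bar>f x - f y\<bar> \<le> e"
  shows "\<bar>(\<integral>x. f x \<partial>limit_measure) - (\<Sum>w\<in>range (address (Suc K)). f (cell_point w) * cell_mass w)\<bar> \<le> e"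
proof -
  have f: "f \<in> borel_measurable borel" by (rule borel_measurable_continuous_onI[OF assms(1)])
  have "integrable unit_interval (\<lambda>t. f (quantile t))"
    using integrable_distr_eq[OF quantile_measurable f] prob_space_limit_measure sets_limit_measure
      integrable_continuous_on_compact_UNIV[OF compact_UNIV assms(1)]
    by (simp add: limit_measure_def prob_space_def)
  moreover have "\<bar>f (quantile t) - f (cell_point (digits t (Suc K)))\<bar> \<le> e" if "t \<in> space unit_interval" for t
    using dist_quantile_approx_point[of t K] that by (intro osc) (simp add: space_unit_interval approx_point_def)
  moreover have "{t\<in>space unit_interval. digits t (Suc K) = w} \<in> sets unit_interval" for w
    using measurable_unit_interval[OF digits_measurable[of "Suc K"]]
    by (simp add: measurable_count_space_eq2 del: digits.simps)
  ultimately have "\<bar>(\<integral>t. f (quantile t) \<partial>unit_interval) - (\<Sum>w\<in>range (address (Suc K)). f (cell_point w) *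
      measure unit_interval {t\<in>space unit_interval. digits t (Suc K) = w})\<bar> \<le> e"
    using digits_in_range_address
    by (intro integral_approx_finite_partition prob_space_unit_interval finite_range_address)
      (auto simp: space_unit_interval simp del: digits.simps)
  moreover have "(\<integral>x. f x \<partial>limit_measure) = (\<integral>t. f (quantile t) \<partial>unit_interval)"
    unfolding limit_measure_def by (rule integral_distr[OF quantile_measurable f])
  moreover have "(\<Sum>w\<in>range (address (Suc K)). f (cell_point w) *
      measure unit_interval {t\<in>space unit_interval. digits t (Suc K) = w}) =
      (\<Sum>w\<in>range (address (Suc K)). f (cell_point w) * cell_mass w)"
    by (intro sum.cong refl) (auto simp: measure_digits_eq simp del: digits.simps)
  ultimately show ?thesis by (simp del: digits.simps)
qed

theorem converges_weakly_limit_measure: "converges_weakly N limit_measure"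
  unfolding converges_weakly_def
proof (intro allI impI LIMSEQ_I)
  fix f :: "'c \<Rightarrow> real" and r :: real
  assume f: "continuous_on UNIV f" and "0 < r"
  define e where "e = r / 3"
  have "e > 0" using \<open>0 < r\<close> by (simp add: e_def)
  obtain \<delta> where "\<delta> > 0" and \<delta>: "\<And>x y. dist x y < \<delta> \<Longrightarrow> dist (f x) (f y) < e"
    using compact_uniformly_continuous[OF f compact_UNIV] \<open>e > 0\<close>
    unfolding uniformly_continuous_on_def by (metis UNIV_I)
  obtain K where "2 * mesh K < \<delta>" using mesh_small[OF \<open>\<delta> > 0\<close>] by blast
  then have osc: "\<bar>f x - f y\<bar> \<le> e" if "dist x y \<le> 2 * mesh K" for x y
    using \<delta>[of x y] that by (simp add: dist_real_def)
  let ?S = "\<lambda>\<mu>. \<Sum>w\<in>range (address (Suc K)). f (cell_point w) * \<mu> w"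
  have "(\<lambda>n. ?S (\<lambda>w. measure (N n) (cell w))) \<longlonglongrightarrow> ?S cell_mass"
    by (intro tendsto_sum tendsto_mult_left cell_mass_tendsto)
  then obtain n0 where n0: "\<And>n. n \<ge> n0 \<Longrightarrow> \<bar>?S (\<lambda>w. measure (N n) (cell w)) - ?S cell_mass\<bar> < e"
    using \<open>e > 0\<close> by (auto simp: LIMSEQ_iff)
  show "\<exists>n0. \<forall>n\<ge>n0. norm ((\<integral>x. f x \<partial>N n) - (\<integral>x. f x \<partial>limit_measure)) < r"
  proof (intro exI allI impI)
    fix n assume "n \<ge> n0"
    have "\<bar>(\<integral>x. f x \<partial>N n) - ?S (\<lambda>w. measure (N n) (cell w))\<bar> \<le> e"
      by (rule integral_N_near_cell_sum[where K=K, OF f osc])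
    moreover have "\<bar>(\<integral>x. f x \<partial>limit_measure) - ?S cell_mass\<bar> \<le> e"
      by (rule integral_limit_measure_near_cell_sum[where K=K, OF f osc])
    moreover have "\<bar>?S (\<lambda>w. measure (N n) (cell w)) - ?S cell_mass\<bar> < e"
      using n0 \<open>n \<ge> n0\<close> by blast
    ultimately show "norm ((\<integral>x. f x \<partial>N n) - (\<integral>x. f x \<partial>limit_measure)) < r"
      unfolding real_norm_def e_def by linarith
  qed
qed

end

lemma (in prob_seq_on_compact) cell_convergent_subseq:
  "\<exists>d. strict_mono d \<and> cell_convergent_prob_seq (N \<circ> d)"
proof -
  have "\<bar>measure (N n) (cell (from_nat i))\<bar> \<le> 1" for n i
    using prob_space.prob_le_1[OF prob_space_N] by simp
  then obtain d where d: "strict_mono d"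
    and conv: "\<And>i. convergent (\<lambda>k. measure (N (d k)) (cell (from_nat i)))"
    using bounded_double_seq_diagonal_convergent[of "\<lambda>n i. measure (N n) (cell (from_nat i))"] by blast
  have "cell_convergent_prob_seq (N \<circ> d)"
  proof (intro cell_convergent_prob_seq.intro prob_seq_on_compact.intro cell_convergent_prob_seq_axioms.intro)
    show "convergent (\<lambda>n. measure ((N \<circ> d) n) (cell w))" for w
      using conv[of "to_nat w"] by (simp only: from_nat_to_nat comp_apply)
  qed (simp_all add: compact_UNIV prob_space_N sets_N)
  with d show ?thesis by blast
qed

theorem prob_seq_compact_weakly_convergent_subseq:
  fixes N :: "nat \<Rightarrow> 'c::metric_space measure"
  assumes "compact (UNIV :: 'c set)" and "\<And>n. prob_space (N n)" and "\<And>n. sets (N n) = sets borel"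
  shows "\<exists>d \<nu>. strict_mono d \<and> prob_space \<nu> \<and> sets \<nu> = sets borel \<and> converges_weakly (N \<circ> d) \<nu>"
proof -
  have "prob_seq_on_compact N" using assms by (rule prob_seq_on_compact.intro)
  then have "\<exists>d. strict_mono d \<and> cell_convergent_prob_seq (N \<circ> d)"
    by (rule prob_seq_on_compact.cell_convergent_subseq)
  then obtain d where "strict_mono d" and "cell_convergent_prob_seq (N \<circ> d)"
    by blast
  interpret cell_convergent_prob_seq "N \<circ> d" by fact
  show ?thesis
    using \<open>strict_mono d\<close> prob_space_limit_measure sets_limit_measure converges_weakly_limit_measure
    by (intro exI conjI)
qed

section \<open>Holonomic measures\<close>

locale compact_skew_product =
  fixes \<tau> :: "'b::metric_space \<Rightarrow> 'a::metric_space \<Rightarrow> 'a"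
  assumes compact_X: "compact (UNIV :: 'a set)" and compact_Theta: "compact (UNIV :: 'b set)"
    and continuous_tau: "continuous_on UNIV (\<lambda>(\<theta>, x). \<tau> \<theta> x)"
begin

lemma compact_Omega: "compact (UNIV :: ('a \<times> 'b) set)"
  using compact_Times[OF compact_X compact_Theta] by simp

lemma continuous_on_tau_Omega: "continuous_on UNIV (\<lambda>\<omega> :: 'a \<times> 'b. \<tau> (snd \<omega>) (fst \<omega>))"
proof -
  have "continuous_on UNIV (\<lambda>\<omega> :: 'a \<times> 'b. (\<lambda>(\<theta>, x). \<tau> \<theta> x) (snd \<omega>, fst \<omega>))"
    by (intro continuous_on_compose2[OF continuous_tau] continuous_intros) auto
  then show ?thesis by simp
qed

lemma continuous_on_tau_fixed: "continuous_on UNIV (\<lambda>\<theta>. \<tau> \<theta> x)"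
proof -
  have "continuous_on UNIV (\<lambda>\<theta>. (\<lambda>(\<theta>, x). \<tau> \<theta> x) (\<theta>, x))"
    by (intro continuous_on_compose2[OF continuous_tau] continuous_intros) auto
  then show ?thesis by simp
qed

lemma continuous_on_coboundary:
  fixes f :: "'a \<Rightarrow> real"
  assumes "continuous_on UNIV f"
  shows "continuous_on UNIV (\<lambda>\<omega> :: 'a \<times> 'b. f (\<tau> (snd \<omega>) (fst \<omega>)) - f (fst \<omega>))"
  by (intro continuous_on_diff continuous_on_compose2[OF assms continuous_on_tau_Omega]
      continuous_on_compose2[OF assms continuous_on_fst[OF continuous_on_id]]) auto

lemma holonomic_weak_limit:
  fixes N :: "nat \<Rightarrow> ('a \<times> 'b) measure"
  assumes "converges_weakly N \<nu>" and "prob_space \<nu>" and "sets \<nu> = sets borel"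
    and defect_tendsto_0: "\<And>f :: 'a \<Rightarrow> real. continuous_on UNIV f \<Longrightarrow>
      (\<lambda>n. \<integral>\<omega>. f (\<tau> (snd \<omega>) (fst \<omega>)) - f (fst \<omega>) \<partial>N n) \<longlonglongrightarrow> 0"
  shows "holonomic \<tau> \<nu>"
  unfolding holonomic_def
proof (intro conjI assms allI impI)
  fix f :: "'a \<Rightarrow> real" assume f: "continuous_on UNIV f"
  have "(\<lambda>n. \<integral>\<omega>. f (\<tau> (snd \<omega>) (fst \<omega>)) - f (fst \<omega>) \<partial>N n)
      \<longlonglongrightarrow> (\<integral>\<omega>. f (\<tau> (snd \<omega>) (fst \<omega>)) - f (fst \<omega>) \<partial>\<nu>)"
    using assms(1) continuous_on_coboundary[OF f] by (simp add: converges_weakly_def)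
  then show "(\<integral>\<omega>. f (\<tau> (snd \<omega>) (fst \<omega>)) - f (fst \<omega>) \<partial>\<nu>) = 0"
    using defect_tendsto_0[OF f] LIMSEQ_unique by blast
qed

lemma holonomic_weakly_convergent_subseq:
  fixes N :: "nat \<Rightarrow> ('a \<times> 'b) measure"
  assumes "\<And>n. holonomic \<tau> (N n)"
  shows "\<exists>d \<nu>. strict_mono d \<and> holonomic \<tau> \<nu> \<and> converges_weakly (N \<circ> d) \<nu>"
proof -
  obtain d \<nu> where d: "strict_mono d" and \<nu>: "prob_space \<nu>" "sets \<nu> = sets borel"
    and conv: "converges_weakly (N \<circ> d) \<nu>"
    using prob_seq_compact_weakly_convergent_subseq[OF compact_Omega, of N] assms
    by (auto simp: holonomic_def)
  have "holonomic \<tau> \<nu>"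
    using assms by (intro holonomic_weak_limit[OF conv \<nu>]) (simp add: holonomic_def)
  with d conv show ?thesis by blast
qed

text \<open>Krylov--Bogolyubov: limits of the empirical measures of an orbit of a single
  map \<open>\<tau> \<theta>\<^sub>0\<close> are holonomic, since their defects telescope.\<close>
lemma holonomic_exists: "\<exists>\<nu>. holonomic \<tau> \<nu>"
proof -
  define \<theta>\<^sub>0 :: 'b where "\<theta>\<^sub>0 = undefined"
  define x\<^sub>0 :: 'a where "x\<^sub>0 = undefined"
  define orbit where "orbit k = ((\<tau> \<theta>\<^sub>0) ^^ k) x\<^sub>0" for k
  define N where "N n = distr (measure_pmf (pmf_of_set {..<Suc n})) borel (\<lambda>k. (orbit k, \<theta>\<^sub>0))" for n
  have meas: "(\<lambda>k. (orbit k, \<theta>\<^sub>0)) \<in> measurable (measure_pmf (pmf_of_set {..<Suc n})) borel" for n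
    by simp
  have prob: "prob_space (N n)" and sets: "sets (N n) = sets borel" for n
    unfolding N_def by (auto intro: prob_space.prob_space_distr[OF prob_space_measure_pmf meas])
  have integral_N: "(\<integral>\<omega>. h \<omega> \<partial>N n) = (\<Sum>k<Suc n. h (orbit k, \<theta>\<^sub>0)) / real (Suc n)"
    if "h \<in> borel_measurable borel" for n and h :: "'a \<times> 'b \<Rightarrow> real"
    unfolding N_def integral_distr[OF meas that] by (subst integral_pmf_of_set) auto
  obtain d \<nu> where d: "strict_mono d" and \<nu>: "prob_space \<nu>" "sets \<nu> = sets borel"
    and conv: "converges_weakly (N \<circ> d) \<nu>"
    using prob_seq_compact_weakly_convergent_subseq[OF compact_Omega, of N] prob sets by blast
  have "holonomic \<tau> \<nu>"
  proof (rule holonomic_weak_limit[OF conv \<nu>])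
    fix f :: "'a \<Rightarrow> real" assume f: "continuous_on UNIV f"
    obtain B where B: "\<And>x. \<bar>f x\<bar> \<le> B" using continuous_on_compact_UNIV_bounded[OF compact_X f] by blast
    have defect: "(\<integral>\<omega>. f (\<tau> (snd \<omega>) (fst \<omega>)) - f (fst \<omega>) \<partial>N n)
        = (f (orbit (Suc n)) - f (orbit 0)) / real (Suc n)" for n
    proof -
      have "(\<integral>\<omega>. f (\<tau> (snd \<omega>) (fst \<omega>)) - f (fst \<omega>) \<partial>N n)
          = (\<Sum>k<Suc n. f (orbit (Suc k)) - f (orbit k)) / real (Suc n)"
        using borel_measurable_continuous_onI[OF continuous_on_coboundary[OF f]]
        by (simp add: integral_N orbit_def)
      then show ?thesis using sum_lessThan_telescope[of "\<lambda>k. f (orbit k)" "Suc n"] by simp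
    qed
    have "(\<lambda>n. \<integral>\<omega>. f (\<tau> (snd \<omega>) (fst \<omega>)) - f (fst \<omega>) \<partial>N n) \<longlonglongrightarrow> 0"
      using bounded_diff_div_Suc_tendsto_0[of "\<lambda>k. f (orbit k)", OF B] by (simp add: defect)
    then show "(\<lambda>n. \<integral>\<omega>. f (\<tau> (snd \<omega>) (fst \<omega>)) - f (fst \<omega>) \<partial>(N \<circ> d) n) \<longlonglongrightarrow> 0"
      using LIMSEQ_subseq_LIMSEQ[OF _ d] by (simp add: comp_def)
  qed
  then show ?thesis by blast
qed

end

section \<open>Pressure and equilibrium states\<close>

lemma fst_measurable_borel:
  fixes \<nu> :: "('a::topological_space \<times> 'b::topological_space) measure"
  assumes "sets \<nu> = sets borel"
  shows "fst \<in> measurable \<nu> borel"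
proof -
  have "(\<lambda>\<omega> :: 'a \<times> 'b. fst \<omega>) \<in> borel_measurable borel"
    by (intro borel_measurable_continuous_onI continuous_intros)
  then show ?thesis by (subst measurable_cong_sets[OF assms refl]) simp
qed

lemma integral_marg:
  fixes \<nu> :: "('a::topological_space \<times> 'b::topological_space) measure" and h :: "'a \<Rightarrow> real"
  assumes "sets \<nu> = sets borel" and "h \<in> borel_measurable borel"
  shows "(\<integral>x. h x \<partial>marg \<nu>) = (\<integral>\<omega>. h (fst \<omega>) \<partial>\<nu>)"
  unfolding marg_def by (rule integral_distr[OF fst_measurable_borel[OF assms(1)] assms(2)])

lemma prob_space_marg:
  fixes \<nu> :: "('a::topological_space \<times> 'b::topological_space) measure"
  assumes "prob_space \<nu>" and "sets \<nu> = sets borel"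
  shows "prob_space (marg \<nu>)"
  unfolding marg_def by (rule prob_space.prob_space_distr[OF assms(1) fst_measurable_borel[OF assms(2)]])

lemma sets_marg: "sets (marg \<nu>) = sets borel"
  by (simp add: marg_def)

lemma converges_weakly_marg:
  fixes N :: "nat \<Rightarrow> ('a::topological_space \<times> 'b::topological_space) measure"
  assumes "converges_weakly N \<nu>" and "\<And>n. sets (N n) = sets borel" and "sets \<nu> = sets borel"
  shows "converges_weakly (\<lambda>n. marg (N n)) (marg \<nu>)"
  unfolding converges_weakly_def
proof (intro allI impI)
  fix h :: "'a \<Rightarrow> real" assume h: "continuous_on UNIV h"
  then have "continuous_on UNIV (\<lambda>\<omega> :: 'a \<times> 'b. h (fst \<omega>))"
    by (intro continuous_on_compose2[OF h] continuous_intros) auto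
  then show "(\<lambda>n. \<integral>x. h x \<partial>marg (N n)) \<longlonglongrightarrow> (\<integral>x. h x \<partial>marg \<nu>)"
    using assms borel_measurable_continuous_onI[OF h]
    by (simp add: converges_weakly_def integral_marg)
qed

definition hol_pressure_at ::
    "('b::metric_space \<Rightarrow> 'a::metric_space \<Rightarrow> 'a) \<Rightarrow> 'b measure \<Rightarrow> ('a \<Rightarrow> real) \<Rightarrow> ('a \<times> 'b) measure \<Rightarrow> ereal" where
  "hol_pressure_at \<tau> \<mu> \<psi> \<nu> = (INF g\<in>pos_cont_funs. ereal (\<integral>x. ln (B_q \<mu> \<tau> \<psi> g x / g x) \<partial>marg \<nu>))"

lemma hol_pressure_eq_SUP: "hol_pressure \<tau> \<mu> \<psi> = (SUP \<nu>\<in>{\<nu>. holonomic \<tau> \<nu>}. hol_pressure_at \<tau> \<mu> \<psi> \<nu>)"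
  by (simp add: hol_pressure_def hol_pressure_at_def)

lemma pos_cont_funsD: "g \<in> pos_cont_funs \<Longrightarrow> continuous_on UNIV g \<and> (\<forall>x. g x > 0)"
  by (simp add: pos_cont_funs_def)

locale transfer_setting = compact_skew_product \<tau> for \<tau> :: "'b::metric_space \<Rightarrow> 'a::metric_space \<Rightarrow> 'a" +
  fixes \<mu> :: "'b measure"
  assumes prob_space_mu: "prob_space \<mu>" and sets_mu: "sets \<mu> = sets borel"
begin

lemma integrable_mu_comp_tau:
  fixes g :: "'a \<Rightarrow> real"
  assumes "continuous_on UNIV g"
  shows "integrable \<mu> (\<lambda>\<theta>. g (\<tau> \<theta> x))"
  using prob_space_mu sets_mu
  by (intro integrable_continuous_on_compact_UNIV[OF compact_Theta]
      continuous_on_compose2[OF assms continuous_on_tau_fixed]) (auto simp: prob_space_def)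

lemma continuous_on_B_mu:
  fixes g :: "'a \<Rightarrow> real"
  assumes g: "continuous_on UNIV g"
  shows "continuous_on UNIV (B_mu \<mu> \<tau> g)"
  unfolding continuous_on_iff
proof (intro ballI allI impI)
  fix x :: 'a and e :: real assume "e > 0"
  have "uniformly_continuous_on UNIV (\<lambda>\<omega> :: 'a \<times> 'b. g (\<tau> (snd \<omega>) (fst \<omega>)))"
    by (intro compact_uniformly_continuous[OF _ compact_Omega]
        continuous_on_compose2[OF g continuous_on_tau_Omega]) auto
  then obtain \<delta> where "\<delta> > 0"
    and \<delta>: "\<And>\<omega> \<omega>'. dist \<omega>' \<omega> < \<delta> \<Longrightarrow> dist (g (\<tau> (snd \<omega>') (fst \<omega>'))) (g (\<tau> (snd \<omega>) (fst \<omega>))) < e / 2"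
    using \<open>e > 0\<close> unfolding uniformly_continuous_on_def by (meson half_gt_zero UNIV_I)
  show "\<exists>d>0. \<forall>x'\<in>UNIV. dist x' x < d \<longrightarrow> dist (B_mu \<mu> \<tau> g x') (B_mu \<mu> \<tau> g x) < e"
  proof (intro exI[of _ \<delta>] conjI ballI impI \<open>\<delta> > 0\<close>)
    fix x' assume "dist x' x < \<delta>"
    then have "\<bar>g (\<tau> \<theta> x') - g (\<tau> \<theta> x)\<bar> \<le> e / 2" for \<theta>
      using \<delta>[of "(x', \<theta>)" "(x, \<theta>)"] by (simp add: dist_Pair_Pair dist_real_def)
    then have "\<bar>B_mu \<mu> \<tau> g x' - B_mu \<mu> \<tau> g x\<bar> \<le> e / 2"
      unfolding B_mu_def
      by (intro prob_space_integral_diff_le[OF prob_space_mu integrable_mu_comp_tau[OF g] integrable_mu_comp_tau[OF g]])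
    then show "dist (B_mu \<mu> \<tau> g x') (B_mu \<mu> \<tau> g x) < e"
      using \<open>e > 0\<close> by (simp add: dist_real_def)
  qed
qed

lemma B_mu_pos:
  assumes "g \<in> pos_cont_funs"
  shows "B_mu \<mu> \<tau> g x > 0"
proof -
  interpret prob_space \<mu> by (rule prob_space_mu)
  obtain m where "m > 0" and m: "\<And>y. m \<le> g y"
    using continuous_on_compact_UNIV_pos_bounded_below[OF compact_X] pos_cont_funsD[OF assms] by blast
  have "(\<integral>\<theta>. m \<partial>\<mu>) \<le> (\<integral>\<theta>. g (\<tau> \<theta> x) \<partial>\<mu>)"
    using pos_cont_funsD[OF assms] by (intro integral_mono integrable_mu_comp_tau) (auto simp: m)
  then show ?thesis using \<open>m > 0\<close> by (simp add: B_mu_def prob_space)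
qed

lemma continuous_on_ln_B_mu_div:
  assumes "g \<in> pos_cont_funs" and "h \<in> pos_cont_funs"
  shows "continuous_on UNIV (\<lambda>x. ln (B_mu \<mu> \<tau> g x / h x))"
  using pos_cont_funsD[OF assms(1)] pos_cont_funsD[OF assms(2)] B_mu_pos[OF assms(1)]
  by (intro continuous_on_ln continuous_on_divide continuous_on_B_mu) (auto simp: less_imp_neq[symmetric])

end

locale potential_setting = transfer_setting \<tau> \<mu> for \<tau> :: "'b::metric_space \<Rightarrow> 'a::metric_space \<Rightarrow> 'a" and \<mu> +
  fixes \<psi> :: "'a \<Rightarrow> real"
  assumes psi_pos_cont: "\<psi> \<in> pos_cont_funs"
begin

lemma B_q_eq_B_mu_mult:
  fixes g :: "'a \<Rightarrow> real"
  assumes g: "continuous_on UNIV g"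
  shows "B_q \<mu> \<tau> \<psi> g x = B_mu \<mu> \<tau> (\<lambda>y. g y * \<psi> y) x"
proof -
  have measurable: "(\<lambda>\<theta>. h (\<tau> \<theta> x)) \<in> borel_measurable \<mu>" if "continuous_on UNIV h" for h :: "'a \<Rightarrow> real"
    using borel_measurable_continuous_onI[OF continuous_on_compose2[OF that continuous_on_tau_fixed]]
      measurable_cong_sets[OF sets_mu refl] by blast
  have "B_q \<mu> \<tau> \<psi> g x = (\<integral>\<theta>. \<psi> (\<tau> \<theta> x) *\<^sub>R g (\<tau> \<theta> x) \<partial>\<mu>)"
    unfolding B_q_def q_meas_def using pos_cont_funsD[OF psi_pos_cont]
    by (intro integral_density measurable g) (auto simp: less_imp_le)
  then show ?thesis by (simp add: B_mu_def mult.commute)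
qed

lemma mult_psi_image_pos_cont_funs: "(\<lambda>g y. g y * \<psi> y) ` pos_cont_funs = pos_cont_funs"
proof (intro set_eqI iffI)
  fix h :: "'a \<Rightarrow> real" assume "h \<in> (\<lambda>g y. g y * \<psi> y) ` pos_cont_funs"
  then show "h \<in> pos_cont_funs"
    using pos_cont_funsD[OF psi_pos_cont] by (auto simp: pos_cont_funs_def intro!: continuous_intros)
next
  fix h :: "'a \<Rightarrow> real" assume h: "h \<in> pos_cont_funs"
  have "(\<lambda>y. h y / \<psi> y) \<in> pos_cont_funs"
    using h pos_cont_funsD[OF psi_pos_cont]
    by (auto simp: pos_cont_funs_def less_imp_neq[symmetric] intro!: continuous_intros)
  moreover have "(\<lambda>y. h y / \<psi> y * \<psi> y) = h"
    using pos_cont_funsD[OF psi_pos_cont] by (auto simp: less_imp_neq[symmetric])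
  ultimately show "h \<in> (\<lambda>g y. g y * \<psi> y) ` pos_cont_funs"
    by (intro image_eqI[where x="\<lambda>y. h y / \<psi> y"]) simp_all
qed

lemma ln_B_q_div_eq:
  assumes "g \<in> pos_cont_funs"
  shows "ln (B_q \<mu> \<tau> \<psi> g x / g x)
    = ln (B_mu \<mu> \<tau> (\<lambda>y. g y * \<psi> y) x / (g x * \<psi> x)) + ln (\<psi> x)"
proof -
  have gpsi: "(\<lambda>y. g y * \<psi> y) \<in> pos_cont_funs"
    using assms mult_psi_image_pos_cont_funs by blast
  have "g x > 0" and "\<psi> x > 0" and "B_mu \<mu> \<tau> (\<lambda>y. g y * \<psi> y) x > 0"
    using pos_cont_funsD[OF assms] pos_cont_funsD[OF psi_pos_cont] B_mu_pos[OF gpsi] by auto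
  then show ?thesis
    by (simp add: B_q_eq_B_mu_mult[OF conjunct1[OF pos_cont_funsD[OF assms]]] ln_div ln_mult)
qed

lemma continuous_on_ln_B_q_div:
  assumes "g \<in> pos_cont_funs"
  shows "continuous_on UNIV (\<lambda>x. ln (B_q \<mu> \<tau> \<psi> g x / g x))"
proof -
  have "(\<lambda>y. g y * \<psi> y) \<in> pos_cont_funs"
    using assms mult_psi_image_pos_cont_funs by blast
  then show ?thesis
    using continuous_on_ln_B_mu_div[OF _ assms] pos_cont_funsD[OF assms]
    by (simp add: B_q_eq_B_mu_mult)
qed

text \<open>The substitution \<open>h = g * \<psi>\<close> turns the infimum defining the pressure functional
  into the one defining the entropy.\<close>

lemma hol_entropy_plus_potential:
  assumes "prob_space \<nu>" and "sets \<nu> = sets borel"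
  shows "hol_entropy \<tau> \<mu> \<nu> + ereal (\<integral>x. ln (\<psi> x) \<partial>marg \<nu>) = hol_pressure_at \<tau> \<mu> \<psi> \<nu>"
proof -
  let ?I = "\<lambda>h. \<integral>x. h x \<partial>marg \<nu>"
  have integrable: "integrable (marg \<nu>) h" if "continuous_on UNIV h" for h :: "'a \<Rightarrow> real"
    using prob_space_marg[OF assms] by (intro integrable_continuous_on_compact_UNIV[OF compact_X that])
      (auto simp: sets_marg prob_space_def)
  have ln_psi: "continuous_on UNIV (\<lambda>x. ln (\<psi> x))"
    using pos_cont_funsD[OF psi_pos_cont] by (auto intro!: continuous_on_ln simp: less_imp_neq[symmetric])
  have "?I (\<lambda>x. ln (B_q \<mu> \<tau> \<psi> g x / g x))
      = ?I (\<lambda>x. ln (B_mu \<mu> \<tau> (\<lambda>y. g y * \<psi> y) x / (g x * \<psi> x))) + ?I (\<lambda>x. ln (\<psi> x))"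
    if g: "g \<in> pos_cont_funs" for g
  proof -
    have "(\<lambda>y. g y * \<psi> y) \<in> pos_cont_funs"
      using g mult_psi_image_pos_cont_funs by blast
    then have "continuous_on UNIV (\<lambda>x. ln (B_mu \<mu> \<tau> (\<lambda>y. g y * \<psi> y) x / (g x * \<psi> x)))"
      by (intro continuous_on_ln_B_mu_div)
    then show ?thesis
      by (simp add: ln_B_q_div_eq[OF g] integrable ln_psi)
  qed
  then have "hol_pressure_at \<tau> \<mu> \<psi> \<nu>
      = (INF g\<in>pos_cont_funs. ereal (?I (\<lambda>x. ln (B_mu \<mu> \<tau> (\<lambda>y. g y * \<psi> y) x / (g x * \<psi> x))))
          + ereal (?I (\<lambda>x. ln (\<psi> x))))"
    unfolding hol_pressure_at_def by (intro INF_cong) simp_all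
  also have "\<dots> = (INF h\<in>pos_cont_funs. ereal (?I (\<lambda>x. ln (B_mu \<mu> \<tau> h x / h x))) + ereal (?I (\<lambda>x. ln (\<psi> x))))"
    by (subst (2) mult_psi_image_pos_cont_funs[symmetric]) (simp add: image_comp)
  also have "\<dots> = hol_entropy \<tau> \<mu> \<nu> + ereal (?I (\<lambda>x. ln (\<psi> x)))"
    unfolding hol_entropy_def by (rule INF_add_ereal_const)
  finally show ?thesis by simp
qed

lemma hol_pressure_at_upper_semicontinuous:
  assumes "converges_weakly N \<nu>" and "\<And>n. sets (N n) = sets borel" and "sets \<nu> = sets borel"
  shows "limsup (\<lambda>n. hol_pressure_at \<tau> \<mu> \<psi> (N n)) \<le> hol_pressure_at \<tau> \<mu> \<psi> \<nu>"
  unfolding hol_pressure_at_def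
proof (rule INF_greatest)
  fix g :: "'a \<Rightarrow> real" assume g: "g \<in> pos_cont_funs"
  let ?I = "\<lambda>\<nu>. \<integral>x. ln (B_q \<mu> \<tau> \<psi> g x / g x) \<partial>marg \<nu>"
  have "(\<lambda>n. ereal (?I (N n))) \<longlonglongrightarrow> ereal (?I \<nu>)"
    using converges_weakly_marg[OF assms] continuous_on_ln_B_q_div[OF g]
    by (simp add: converges_weakly_def)
  then have "limsup (\<lambda>n. ereal (?I (N n))) = ereal (?I \<nu>)"
    by (rule lim_imp_Limsup[OF trivial_limit_sequentially])
  moreover have "limsup (\<lambda>n. INF g\<in>pos_cont_funs. ereal (\<integral>x. ln (B_q \<mu> \<tau> \<psi> g x / g x) \<partial>marg (N n)))
      \<le> limsup (\<lambda>n. ereal (?I (N n)))"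
    by (intro Limsup_mono always_eventually allI INF_lower g)
  ultimately show "limsup (\<lambda>n. INF g\<in>pos_cont_funs. ereal (\<integral>x. ln (B_q \<mu> \<tau> \<psi> g x / g x) \<partial>marg (N n)))
      \<le> ereal (?I \<nu>)"
    by simp
qed

theorem hol_pressure_attained:
  "\<exists>\<nu>. holonomic \<tau> \<nu> \<and> hol_pressure_at \<tau> \<mu> \<psi> \<nu> = hol_pressure \<tau> \<mu> \<psi>"
proof -
  have "\<exists>\<nu>\<in>{\<nu>. holonomic \<tau> \<nu>}.
      hol_pressure_at \<tau> \<mu> \<psi> \<nu> = (SUP \<nu>\<in>{\<nu>. holonomic \<tau> \<nu>}. hol_pressure_at \<tau> \<mu> \<psi> \<nu>)"
  proof (rule SUP_attained_if_sequentially_upper_compact)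
    show "{\<nu>. holonomic \<tau> \<nu>} \<noteq> {}" using holonomic_exists by blast
    fix N :: "nat \<Rightarrow> ('a \<times> 'b) measure" assume "\<And>n. N n \<in> {\<nu>. holonomic \<tau> \<nu>}"
    then have hol: "\<And>n. holonomic \<tau> (N n)" by simp
    then obtain d \<nu> where "strict_mono d" and "holonomic \<tau> \<nu>" and conv: "converges_weakly (N \<circ> d) \<nu>"
      using holonomic_weakly_convergent_subseq by blast
    moreover have "limsup (\<lambda>n. hol_pressure_at \<tau> \<mu> \<psi> (N (d n))) \<le> hol_pressure_at \<tau> \<mu> \<psi> \<nu>"
      using hol_pressure_at_upper_semicontinuous[OF conv] hol \<open>holonomic \<tau> \<nu>\<close>
      by (simp add: holonomic_def)
    ultimately show "\<exists>d \<nu>. strict_mono d \<and> \<nu> \<in> {\<nu>. holonomic \<tau> \<nu>} \<and>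
        limsup (\<lambda>n. hol_pressure_at \<tau> \<mu> \<psi> (N (d n))) \<le> hol_pressure_at \<tau> \<mu> \<psi> \<nu>"
      by blast
  qed
  then show ?thesis by (auto simp: hol_pressure_eq_SUP)
qed

end

theorem mainTheorem7:
  fixes \<tau> :: "'b::metric_space \<Rightarrow> 'a::metric_space \<Rightarrow> 'a"
    and \<mu> :: "'b measure" and \<psi> :: "'a \<Rightarrow> real"
  assumes "compact (UNIV :: 'a set)" and "compact (UNIV :: 'b set)"
    and "continuous_on UNIV (\<lambda>(\<theta>, x). \<tau> \<theta> x)"
    and "prob_space \<mu>" and "sets \<mu> = sets borel"
    and "continuous_on UNIV \<psi>" and "\<forall>x. \<psi> x > 0"
  shows "\<exists>\<nu>. equilibrium_state \<tau> \<mu> \<psi> \<nu>"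
proof -
  interpret potential_setting \<tau> \<mu> \<psi>
    using assms by (intro potential_setting.intro potential_setting_axioms.intro transfer_setting.intro
        transfer_setting_axioms.intro compact_skew_product.intro) (simp_all add: pos_cont_funs_def)
  obtain \<nu> where "holonomic \<tau> \<nu>" and "hol_pressure_at \<tau> \<mu> \<psi> \<nu> = hol_pressure \<tau> \<mu> \<psi>"
    using hol_pressure_attained by blast
  moreover have "hol_entropy \<tau> \<mu> \<nu> + ereal (\<integral>x. ln (\<psi> x) \<partial>marg \<nu>) = hol_pressure_at \<tau> \<mu> \<psi> \<nu>"
    using \<open>holonomic \<tau> \<nu>\<close> unfolding holonomic_def by (intro hol_entropy_plus_potential) auto
  ultimately have "equilibrium_state \<tau> \<mu> \<psi> \<nu>"
    unfolding equilibrium_state_def by simp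
  then show ?thesis ..
qed

end
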